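(* $A(1)=\int_0^\infty\left(\frac1x-\frac{1}{e^x-1}\right)^2dx=2C-\frac12.$
   Context: $A(v)=\int_0^\infty\left(\frac{1}{xv}-\frac{1}{e^{xv}-1}\right)\left(\frac1x-\frac{1}{e^x-1}\right)dx$ for $v>0$. $C=\frac{\log(2\pi)-\gamma}{2}$, with $\gamma$ the Euler–Mascheroni constant. *)

theory Defs
  imports "HOL-Analysis.Analysis"
begin

definition A_integrand :: "real \<Rightarrow> real \<Rightarrow> real" where
  "A_integrand v x = (1 / (x * v) - 1 / (exp (x * v) - 1)) * (1 / x - 1 / (exp x - 1))"

definition A :: "real \<Rightarrow> real" where
  "A v = integral {0<..} (A_integrand v)"

definition C_const :: real where
  "C_const = (ln (2 * pi) - euler_mascheroni) / 2"

end

theory Submission imports Defs "HOL-Real_Asymp.Real_Asymp" begin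

text \<open>Write \<open>f(x) = 1/x - 1/(e\<^sup>x - 1)\<close>. Summing a geometric series on each interval \<open>[n, n+1)\<close> gives
  \<open>f(x)/x = \<integral>\<^sub>0\<^sup>\<infinity> frac(t) e\<^sup>-\<^sup>x\<^sup>t dt\<close>, so by Tonelli \<open>\<integral>\<^sub>0\<^sup>\<infinity> f\<^sup>2 = \<integral>\<^sub>0\<^sup>\<infinity> frac(t) \<Phi>(t) dt\<close> with
  \<open>\<Phi>(t) = \<integral>\<^sub>0\<^sup>\<infinity> x f(x) e\<^sup>-\<^sup>x\<^sup>t dx = 1/t - \<Sum>\<^sub>k 1/(k+1+t)\<^sup>2\<close>. On \<open>[n, n+1]\<close> this integrates in closed
  form to \<open>(1 - n ln(1 + 1/n)) - (H\<^sub>n\<^sub>+\<^sub>1 - ln(n+1) - \<gamma>)\<close>. The partial sums of these terms are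
  twice the Stirling remainder \<open>ln n! - (n + 1/2) ln n + n\<close> minus \<open>(n+1)(H\<^sub>n - ln n - \<gamma>)\<close>, whose limits
  \<open>ln(2\<pi>)/2\<close> (from Wallis' product) and \<open>1/2\<close> (from the Euler--Mascheroni bounds) give
  \<open>ln(2\<pi>) - \<gamma> - 1/2 = 2C - 1/2\<close>.\<close>

definition stirling_remainder :: "nat \<Rightarrow> real" where
  "stirling_remainder n = ln (fact n) - (real n + 1/2) * ln (real n) + real n"

definition harm_remainder :: "nat \<Rightarrow> real" where
  "harm_remainder n = harm n - ln (real n) - euler_mascheroni"

lemma wallis_partial_product_eq:
  "(\<Prod>k=1..n. (4*real k^2) / (4*real k^2 - 1)) =
     (2^n * fact n)^4 / ((fact (2*n))^2 * (2*real n + 1))"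
proof (induction n)
  case 0 then show ?case by simp
next
  case (Suc n)
  have "(\<Prod>k=1..Suc n. (4*real k^2) / (4*real k^2 - 1)) =
        (2^n * fact n)^4 / ((fact (2*n))^2 * (2*real n + 1)) * ((4*(real n + 1)^2) / (4*(real n + 1)^2 - 1))"
    using Suc by (simp add: prod.nat_ivl_Suc' add.commute)
  also have "4*(real n + 1)^2 - 1 = (2*real n + 1) * (2*real n + 3)"
    by (simp add: power2_eq_square algebra_simps)
  also have "(2^n * fact n)^4 / ((fact (2*n))^2 * (2*real n + 1)) * ((4*(real n + 1)^2) / ((2*real n + 1) * (2*real n + 3)))
      = (2 * (2^n * fact n) * (real n + 1))^4 / (((2*real n + 2) * (2*real n + 1) * fact (2*n))^2 * (2*real n + 3))"
    by (simp add: divide_simps) algebra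
  also have "\<dots> = (2^Suc n * fact (Suc n))^4 / ((fact (2*Suc n))^2 * (2*real (Suc n) + 1))"
    by (simp add: algebra_simps)
  finally show ?case .
qed

lemma ln_wallis_partial_product:
  assumes "n \<ge> 1"
  shows "ln (\<Prod>k=1..n. (4*real k^2) / (4*real k^2 - 1)) =
    4 * stirling_remainder n - 2 * stirling_remainder (2*n) - ln 2 + ln (real n) - ln (2*real n + 1)"
proof -
  have "ln ((2^n * fact n)^4 / ((fact (2*n))^2 * (2*real n + 1)) :: real) =
     4 * (real n * ln 2 + ln (fact n)) - 2 * ln (fact (2*n)) - ln (2*real n + 1)"
    by (simp add: ln_div ln_mult ln_realpow)
  moreover have "ln (real (2*n)) = ln 2 + ln (real n)" using assms by (simp add: ln_mult)
  ultimately show ?thesis unfolding wallis_partial_product_eq stirling_remainder_def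
    by (simp add: algebra_simps)
qed

lemma pade_le_ln_add_one:
  fixes x :: real assumes "x \<ge> 0" shows "2*x/(2+x) \<le> ln (1 + x)"
proof -
  let ?h = "\<lambda>y::real. ln (1 + y) - 2*y/(2+y)"
  have "?h 0 \<le> ?h x"
  proof (rule DERIV_nonneg_imp_nondecreasing[of 0 x ?h])
    fix y :: real assume y: "0 \<le> y" "y \<le> x"
    have "(?h has_real_derivative (1/(1+y) - 4/(2+y)^2)) (at y)"
      using y by (auto intro!: derivative_eq_intros simp: field_simps power2_eq_square)
    moreover have "4*(1+y) \<le> (2+y)^2" by (simp add: power2_eq_square algebra_simps)
    then have "4/(2+y)^2 \<le> 1/(1+y)" using y by (simp add: field_simps)
    ultimately show "\<exists>d. (?h has_real_derivative d) (at y) \<and> 0 \<le> d" by force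
  qed (use assms in simp)
  then show ?thesis by simp
qed

lemma stirling_remainder_Suc_le:
  assumes "n \<ge> 1" shows "stirling_remainder (Suc n) \<le> stirling_remainder n"
proof -
  have "1 / (real n + 1/2) = 2*(1/real n)/(2 + 1/real n)" using assms by (simp add: field_simps)
  also have "\<dots> \<le> ln (1 + 1/real n)" by (rule pade_le_ln_add_one) simp
  also have "ln (1 + 1/real n) = ln (real n + 1) - ln (real n)"
    using assms by (simp add: ln_div field_simps)
  finally have "1 \<le> (real n + 1/2) * (ln (real n + 1) - ln (real n))"
    using assms by (simp add: field_simps)
  moreover have "ln (fact (Suc n) :: real) = ln (real n + 1) + ln (fact n)"
    by (simp add: ln_mult add.commute)
  ultimately show ?thesis unfolding stirling_remainder_def by (simp add: algebra_simps)
qed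

lemma stirling_remainder_le_1: "n \<ge> 1 \<Longrightarrow> stirling_remainder n \<le> 1"
proof (induction n rule: dec_induct)
  case base then show ?case by (simp add: stirling_remainder_def)
next
  case (step n) then show ?case using stirling_remainder_Suc_le[of n] by simp
qed

lemma harm_remainder_asymptotics: "(\<lambda>n. (real n + 1) * harm_remainder n) \<longlonglongrightarrow> 1/2"
proof -
  have harm: "harm (m+2) = harm (Suc m) + 1/(real m + 2)" for m
    by (simp add: harm_Suc field_simps)
  have factor: "real (m+2) + 1 = real m + 3" for m by simp
  have lower: "(real m + 3) * (1/(real m + 2) - 1/(2*(real m+1))) \<le> (real (m+2) + 1) * harm_remainder (m+2)" for m
  proof -
    have "euler_mascheroni \<le> harm (Suc m) - ln (real (m + 2)) + 1/real (2 * (m + 1))"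
      by (rule euler_mascheroni_upper)
    then have "1/(real m + 2) - 1/(2*(real m+1)) \<le> harm_remainder (m+2)"
      unfolding harm_remainder_def harm by (simp add: algebra_simps)
    then show ?thesis unfolding factor by (intro mult_left_mono) auto
  qed
  have upper: "(real (m+2) + 1) * harm_remainder (m+2) \<le> (real m + 3) * (1/(real m + 2) - 1/(2*(real m+2)))" for m
  proof -
    have "harm (Suc m) - ln (real (m + 2)) + 1/real (2 * (m + 2)) \<le> euler_mascheroni"
      by (rule euler_mascheroni_lower)
    then have "harm_remainder (m+2) \<le> 1/(real m + 2) - 1/(2*(real m+2))"
      unfolding harm_remainder_def harm by (simp add: algebra_simps)
    then show ?thesis unfolding factor by (intro mult_left_mono) auto
  qed
  have "(\<lambda>m. (real m + 3) * (1/(real m + 2) - 1/(2*(real m+1)))) \<longlonglongrightarrow> 1/2"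
    and "(\<lambda>m. (real m + 3) * (1/(real m + 2) - 1/(2*(real m+2)))) \<longlonglongrightarrow> 1/2"
    by real_asymp+
  then have "(\<lambda>m. (real (m+2) + 1) * harm_remainder (m+2)) \<longlonglongrightarrow> 1/2"
    by (rule tendsto_sandwich[rotated 2]) (use lower upper in auto)
  then show ?thesis by (rule LIMSEQ_offset)
qed

text \<open>The closed form of \<open>\<integral>\<^sub>n\<^sup>n\<^sup>+\<^sup>1 frac(t)/t dt\<close> (see \<open>frac_div_integral_has_integral\<close>);
  likewise \<open>harm_remainder (Suc n) = \<integral>\<^sub>n\<^sup>n\<^sup>+\<^sup>1 frac(t) \<Sum>\<^sub>k 1/(k+1+t)\<^sup>2 dt\<close>.\<close>
definition frac_div_integral :: "nat \<Rightarrow> real" where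
  "frac_div_integral n = 1 - real n * ln ((real n + 1) / real n)"

lemma sum_frac_div_integral_minus_harm_remainder:
  "(\<Sum>n<N. frac_div_integral n - harm_remainder (Suc n)) =
     2 * stirling_remainder N - (real N + 1) * harm_remainder N - euler_mascheroni"
proof (induction N)
  case 0 then show ?case by (simp add: stirling_remainder_def harm_remainder_def harm_def)
next
  case (Suc N)
  have harm: "(real N + 1) * harm_remainder N = (real N + 1) * (harm (Suc N) - ln (real N) - euler_mascheroni) - 1"
    by (simp add: harm_remainder_def harm_Suc field_simps)
  have ln_fact: "ln (fact (Suc N) :: real) = ln (real N + 1) + ln (fact N)"
    by (simp add: ln_mult add.commute)
  have frac_div: "frac_div_integral N = 1 - real N * ln (real N + 1) + real N * ln (real N)"
    by (cases "N = 0") (simp_all add: frac_div_integral_def ln_div algebra_simps)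
  have "(\<Sum>n<Suc N. frac_div_integral n - harm_remainder (Suc n)) =
      2 * stirling_remainder N - (real N + 1) * harm_remainder N - euler_mascheroni
      + (frac_div_integral N - harm_remainder (Suc N))"
    using Suc by simp
  also have "\<dots> = 2 * stirling_remainder (Suc N) - (real (Suc N) + 1) * harm_remainder (Suc N) - euler_mascheroni"
    unfolding harm frac_div unfolding stirling_remainder_def harm_remainder_def ln_fact
    by (simp add: algebra_simps)
  finally show ?case .
qed

lemma stirling_remainder_limit:
  assumes "stirling_remainder \<longlonglongrightarrow> L"
  shows "L = ln (2*pi) / 2"
proof -
  have "(\<lambda>n. stirling_remainder (2*n)) \<longlonglongrightarrow> L"
    by (rule filterlim_compose[OF assms]) (rule filterlim_subseq, simp add: strict_mono_def)
  moreover have "(\<lambda>n. ln (real n) - ln (2*real n + 1)) \<longlonglongrightarrow> - ln 2" by real_asymp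
  ultimately have "(\<lambda>n. 4 * stirling_remainder n - 2 * stirling_remainder (2*n) - ln 2 + (ln (real n) - ln (2*real n + 1)))
      \<longlonglongrightarrow> 4*L - 2*L - ln 2 + - ln 2"
    by (intro tendsto_intros assms)
  moreover have "eventually (\<lambda>n. 4 * stirling_remainder n - 2 * stirling_remainder (2*n) - ln 2 + (ln (real n) - ln (2*real n + 1)) =
      ln (\<Prod>k=1..n. (4*real k^2) / (4*real k^2 - 1))) sequentially"
    using eventually_ge_at_top[of 1] by eventually_elim (subst ln_wallis_partial_product, simp_all)
  ultimately have "(\<lambda>n. ln (\<Prod>k=1..n. (4*real k^2) / (4*real k^2 - 1))) \<longlonglongrightarrow> 4*L - 2*L - ln 2 + - ln 2"
    by (rule Lim_transform_eventually)
  moreover have "(\<lambda>n. ln (\<Prod>k=1..n. (4*real k^2) / (4*real k^2 - 1))) \<longlonglongrightarrow> ln (pi/2)"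
    by (intro tendsto_intros wallis) simp
  ultimately have "4*L - 2*L - ln 2 + - ln 2 = ln (pi/2)" by (rule LIMSEQ_unique)
  then show ?thesis by (simp add: ln_div ln_mult)
qed

text \<open>The hypothesis holds since the terms are integrals of nonnegative functions
  (\<open>harm_remainder_Suc_le_frac_div_integral\<close>); the resulting monotonicity of the partial sums is
  what makes the Stirling remainder converge.\<close>
lemma sums_frac_div_integral_minus_harm_remainder:
  assumes nonneg: "\<And>n. harm_remainder (Suc n) \<le> frac_div_integral n"
  shows "(\<lambda>n. frac_div_integral n - harm_remainder (Suc n)) sums (ln (2*pi) - euler_mascheroni - 1/2)"
proof -
  define S where "S N = (\<Sum>n<N. frac_div_integral n - harm_remainder (Suc n))" for N
  have "incseq S"
    by (rule incseq_SucI) (use nonneg in \<open>simp add: S_def\<close>)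
  obtain B where B: "\<And>n. \<bar>(real n + 1) * harm_remainder n\<bar> \<le> B"
    using convergent_imp_bounded[OF harm_remainder_asymptotics]
    unfolding bounded_iff by auto
  have "S N \<le> 2 + B" for N
  proof (cases "N = 0")
    case False
    then show ?thesis
      using stirling_remainder_le_1[of N] B[of N] euler_mascheroni_pos
      unfolding S_def sum_frac_div_integral_minus_harm_remainder by simp
  qed (use B[of 0] in \<open>simp add: S_def\<close>)
  then obtain V where SV: "S \<longlonglongrightarrow> V"
    using LIMSEQ_incseq_SUP[OF _ \<open>incseq S\<close>] by (meson bdd_aboveI2)
  have "(\<lambda>N. (S N + (real N + 1) * harm_remainder N + euler_mascheroni) / 2) \<longlonglongrightarrow> (V + 1/2 + euler_mascheroni) / 2"
    by (intro tendsto_intros SV harm_remainder_asymptotics) simp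
  moreover have "(\<lambda>N. (S N + (real N + 1) * harm_remainder N + euler_mascheroni) / 2) = stirling_remainder"
    by (simp add: S_def sum_frac_div_integral_minus_harm_remainder fun_eq_iff)
  ultimately have "(V + 1/2 + euler_mascheroni) / 2 = ln (2*pi) / 2"
    by (intro stirling_remainder_limit) simp
  then have "V = ln (2*pi) - euler_mascheroni - 1/2" by simp
  with SV show ?thesis unfolding S_def sums_def by simp
qed

definition planck_kernel :: "real \<Rightarrow> real" where
  "planck_kernel x = 1/x - 1/(exp x - 1)"

lemma planck_kernel_measurable [measurable]: "planck_kernel \<in> borel_measurable borel"
  unfolding planck_kernel_def by measurable

lemma frac_measurable [measurable]: "(frac :: real \<Rightarrow> real) \<in> borel_measurable borel"
  unfolding frac_def by measurable

lemma planck_kernel_nonneg: assumes "x \<ge> 0" shows "planck_kernel x \<ge> 0"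
proof (cases "x = 0")
  case False
  have "x \<le> exp x - 1" using exp_ge_add_one_self[of x] by linarith
  then have "1/(exp x - 1) \<le> 1/x" using assms False by (intro divide_left_mono) auto
  then show ?thesis unfolding planck_kernel_def by simp
qed (simp add: planck_kernel_def)

lemma frac_eq_on_unit_interval: "t \<in> {real n..<real n + 1} \<Longrightarrow> frac t = t - real n"
  by (simp add: frac_unique_iff)

lemma nn_integral_atLeast_0_split:
  fixes G :: "real \<Rightarrow> ennreal"
  assumes [measurable]: "G \<in> borel_measurable borel"
  shows "(\<integral>\<^sup>+t. G t * indicator {0..} t \<partial>lborel) = (\<Sum>n. \<integral>\<^sup>+t. G t * indicator {real n..<real n + 1} t \<partial>lborel)"
proof -
  have "G t * indicator {0..} t = (\<Sum>n. G t * indicator {real n..<real n + 1} t)" for t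
  proof (cases "t \<ge> 0")
    case True
    define m where "m = nat \<lfloor>t\<rfloor>"
    have m: "real m \<le> t" "t < real m + 1" using True unfolding m_def by linarith+
    have "t \<in> {real n..<real n + 1} \<longleftrightarrow> n = m" for n
    proof
      assume "t \<in> {real n..<real n + 1}"
      then have "\<lfloor>t\<rfloor> = int n" by (intro floor_unique) auto
      then show "n = m" by (simp add: m_def)
    qed (use m in auto)
    then have "(\<Sum>n. G t * indicator {real n..<real n + 1} t) = (\<Sum>n\<in>{m}. G t * indicator {real n..<real n + 1} t)"
      by (intro suminf_finite) auto
    also have "\<dots> = G t" using m by simp
    finally show ?thesis using True by simp
  qed simp
  then have "(\<integral>\<^sup>+t. G t * indicator {0..} t \<partial>lborel) =
      (\<integral>\<^sup>+t. (\<Sum>n. G t * indicator {real n..<real n + 1} t) \<partial>lborel)"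
    by simp
  also have "\<dots> = (\<Sum>n. \<integral>\<^sup>+t. G t * indicator {real n..<real n + 1} t \<partial>lborel)"
    by (rule nn_integral_suminf) measurable
  finally show ?thesis .
qed

lemma nn_integral_Ico_eq_has_integral:
  fixes f :: "real \<Rightarrow> real"
  assumes "a \<le> b" "\<And>x. x \<in> {a..b} \<Longrightarrow> 0 \<le> f x" "(f has_integral I) {a..b}"
  shows "(\<integral>\<^sup>+t. ennreal (f t) * indicator {a..<b} t \<partial>lborel) = ennreal I"
proof -
  have "(\<integral>\<^sup>+t. ennreal (f t) * indicator {a..<b} t \<partial>lborel) = (\<integral>\<^sup>+t. ennreal (f t) * indicator {a..b} t \<partial>lborel)"
    by (intro nn_integral_cong_AE, use AE_lborel_singleton[of b] in eventually_elim)
       (auto simp: indicator_def)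
  also have "\<dots> = ennreal I" using assms by (intro nn_integral_has_integral_lebesgue') auto
  finally show ?thesis .
qed

lemma nn_integral_frac_exp_unit_interval:
  assumes x: "x > 0"
  shows "(\<integral>\<^sup>+t. ennreal (frac t * exp (-x*t)) * indicator {real n..<real n + 1} t \<partial>lborel)
         = ennreal (exp (-x) ^ n * ((1 - exp (-x) - x * exp (-x)) / x^2))"
proof -
  define G where "G t = -((t - real n)/x + 1/x^2) * exp (-x*t)" for t
  have "((\<lambda>t. (t - real n) * exp (-x*t)) has_integral (G (real n + 1) - G (real n))) {real n..real n + 1}"
  proof (rule fundamental_theorem_of_calculus_interior)
    show "continuous_on {real n..real n + 1} G" unfolding G_def using x by (intro continuous_intros) auto
    fix t assume "t \<in> {real n<..<real n + 1}"
    have "(G has_real_derivative (t - real n) * exp (-x*t)) (at t)"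
      unfolding G_def using x
      by (auto intro!: derivative_eq_intros simp: field_simps power2_eq_square)
    then show "(G has_vector_derivative (t - real n) * exp (-x*t)) (at t)"
      by (simp add: has_real_derivative_iff_has_vector_derivative)
  qed simp
  moreover have "G (real n + 1) - G (real n) = exp (-x) ^ n * ((1 - exp (-x) - x * exp (-x)) / x^2)"
  proof -
    have "exp (-x * (real n + 1)) = exp (-x) ^ n * exp (-x)" "exp (-x * real n) = exp (-x) ^ n"
      by (simp_all add: exp_of_nat_mult[symmetric] exp_add[symmetric] algebra_simps)
    then show ?thesis unfolding G_def using x by (simp add: field_simps power2_eq_square)
  qed
  ultimately have "((\<lambda>t. (t - real n) * exp (-x*t)) has_integral
      (exp (-x) ^ n * ((1 - exp (-x) - x * exp (-x)) / x^2))) {real n..real n + 1}"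
    by simp
  then have "(\<integral>\<^sup>+t. ennreal ((t - real n) * exp (-x*t)) * indicator {real n..<real n + 1} t \<partial>lborel)
      = ennreal (exp (-x) ^ n * ((1 - exp (-x) - x * exp (-x)) / x^2))"
    by (intro nn_integral_Ico_eq_has_integral) auto
  then show ?thesis
    by (subst nn_integral_cong[where v = "\<lambda>t. ennreal ((t - real n) * exp (-x*t)) * indicator {real n..<real n + 1} t"])
       (auto simp: frac_eq_on_unit_interval indicator_def)
qed

lemma nn_integral_frac_exp:
  assumes x: "x > 0"
  shows "(\<integral>\<^sup>+t. ennreal (frac t * exp (-x*t)) * indicator {0..} t \<partial>lborel) = ennreal (planck_kernel x / x)"
proof -
  define w where "w = (1 - exp (-x) - x * exp (-x)) / x^2"
  have "w \<ge> 0"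
  proof -
    have "(1+x) * exp (-x) \<le> exp x * exp (-x)"
      by (intro mult_right_mono exp_ge_add_one_self) auto
    then show ?thesis unfolding w_def by (simp add: algebra_simps flip: exp_add)
  qed
  have "(\<lambda>n. exp (-x) ^ n) sums (1 / (1 - exp (-x)))" using x by (intro geometric_sums) simp
  then have geometric: "(\<lambda>n. exp (-x) ^ n * w) sums (1 / (1 - exp (-x)) * w)" by (rule sums_mult2)
  have "(\<integral>\<^sup>+t. ennreal (frac t * exp (-x*t)) * indicator {0..} t \<partial>lborel)
      = (\<Sum>n. \<integral>\<^sup>+t. ennreal (frac t * exp (-x*t)) * indicator {real n..<real n + 1} t \<partial>lborel)"
    by (rule nn_integral_atLeast_0_split) measurable
  also have "\<dots> = (\<Sum>n. ennreal (exp (-x) ^ n * w))"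
    by (simp only: nn_integral_frac_exp_unit_interval[OF x] w_def)
  also have "\<dots> = ennreal (1 / (1 - exp (-x)) * w)"
    using geometric \<open>w \<ge> 0\<close> by (subst suminf_ennreal2) (auto simp: sums_iff)
  also have "1 / (1 - exp (-x)) * w = planck_kernel x / x"
    using x exp_minus_inverse[of x] unfolding w_def planck_kernel_def
    by (simp add: field_simps power2_eq_square exp_minus)
  finally show ?thesis .
qed

lemma nn_integral_exp_atLeast_0:
  assumes a: "a > 0"
  shows "(\<integral>\<^sup>+x. ennreal (exp (-a*x)) * indicator {0..} x \<partial>lborel) = ennreal (1/a)"
proof -
  have "(\<integral>\<^sup>+x. ennreal (exp (-a*x)) * indicator {0..} x \<partial>lborel) = ennreal (0 - (- exp (-a*0)/a))"
  proof (rule nn_integral_FTC_atLeast)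
    show "((\<lambda>x. - exp (-a*x)/a) \<longlongrightarrow> 0) at_top" using a by real_asymp
    show "((\<lambda>x. - exp (-a*x)/a) has_real_derivative exp (-a*x)) (at x)" for x
      using a by (auto intro!: derivative_eq_intros)
  qed auto
  then show ?thesis by simp
qed

lemma nn_integral_mult_exp_atLeast_0:
  assumes a: "a > 0"
  shows "(\<integral>\<^sup>+x. ennreal (x * exp (-a*x)) * indicator {0..} x \<partial>lborel) = ennreal (1/a^2)"
proof -
  have "(\<integral>\<^sup>+x. ennreal (x * exp (-a*x)) * indicator {0..} x \<partial>lborel) = ennreal (0 - (- (0/a + 1/a^2) * exp (-a*0)))"
  proof (rule nn_integral_FTC_atLeast)
    show "((\<lambda>x. - (x/a + 1/a^2) * exp (-a*x)) \<longlongrightarrow> 0) at_top" using a by real_asymp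
    show "((\<lambda>x. - (x/a + 1/a^2) * exp (-a*x)) has_real_derivative x * exp (-a*x)) (at x)" for x
      using a by (auto intro!: derivative_eq_intros simp: field_simps power2_eq_square)
  qed auto
  then show ?thesis by simp
qed

lemma geometric_sums_one_minus_planck_kernel:
  assumes x: "x > 0"
  shows "(\<lambda>k. x * exp (-(real k + 1) * x)) sums (1 - x * planck_kernel x)"
proof -
  define q where "q = exp (-x)"
  have q: "0 < q" "q < 1" using x by (auto simp: q_def)
  have "(\<lambda>k. x * exp (-(real k + 1) * x)) = (\<lambda>k. (x * q) * q^k)"
    unfolding q_def by (simp add: fun_eq_iff exp_of_nat_mult[symmetric] exp_add[symmetric] algebra_simps)
  also have "\<dots> sums (x * q * (1 / (1 - q)))"
    using q by (intro sums_mult geometric_sums) auto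
  also have "x * q * (1 / (1 - q)) = 1 - x * planck_kernel x"
    using x q exp_minus_inverse[of x] unfolding planck_kernel_def q_def
    by (simp add: field_simps exp_minus)
  finally show ?thesis .
qed

definition laplace_x_planck_kernel :: "real \<Rightarrow> ennreal" where
  "laplace_x_planck_kernel t = (\<integral>\<^sup>+x. ennreal (x * planck_kernel x * exp (-x*t)) * indicator {0..} x \<partial>lborel)"

lemma laplace_x_planck_kernel_measurable [measurable]: "laplace_x_planck_kernel \<in> borel_measurable borel"
  unfolding laplace_x_planck_kernel_def by measurable

lemma planck_kernel_plus_suminf_eq_exp:
  assumes x: "x > 0"
  shows "ennreal (x * planck_kernel x * exp (-x*t)) + (\<Sum>k. ennreal (x * exp (-(real k + 1 + t)*x))) = ennreal (exp (-x*t))"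
proof -
  have "(\<lambda>k. x * exp (-(real k + 1 + t)*x)) = (\<lambda>k. x * exp (-(real k + 1) * x) * exp (-x*t))"
    by (simp add: fun_eq_iff algebra_simps flip: exp_add)
  also have "\<dots> sums ((1 - x * planck_kernel x) * exp (-x*t))"
    by (rule sums_mult2[OF geometric_sums_one_minus_planck_kernel[OF x]])
  finally have "(\<lambda>k. x * exp (-(real k + 1 + t)*x)) sums ((1 - x * planck_kernel x) * exp (-x*t))" .
  then have "(\<Sum>k. ennreal (x * exp (-(real k + 1 + t)*x))) = ennreal ((1 - x * planck_kernel x) * exp (-x*t))"
    using x by (subst suminf_ennreal2) (auto simp: sums_iff)
  moreover have "0 \<le> (1 - x * planck_kernel x) * exp (-x*t)"
    using sums_le[OF _ sums_zero geometric_sums_one_minus_planck_kernel[OF x]] x by simp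
  moreover have "0 \<le> x * planck_kernel x * exp (-x*t)" using x planck_kernel_nonneg[of x] by simp
  ultimately have "ennreal (x * planck_kernel x * exp (-x*t)) + (\<Sum>k. ennreal (x * exp (-(real k + 1 + t)*x)))
      = ennreal (x * planck_kernel x * exp (-x*t) + (1 - x * planck_kernel x) * exp (-x*t))"
    by (simp only: ennreal_plus)
  also have "\<dots> = ennreal (exp (-x*t))" by (simp add: algebra_simps)
  finally show ?thesis .
qed

text \<open>In other words \<open>laplace_x_planck_kernel t = 1/t - \<psi>'(t + 1)\<close>, with \<open>\<psi>'\<close> the trigamma function.\<close>
lemma laplace_x_planck_kernel_plus_inverse_squares:
  assumes t: "t > 0"
  shows "laplace_x_planck_kernel t + (\<Sum>k. ennreal (1/(real k + 1 + t)^2)) = ennreal (1/t)"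
proof -
  have "ennreal (1/t) = (\<integral>\<^sup>+x. ennreal (exp (-t*x)) * indicator {0..} x \<partial>lborel)"
    using nn_integral_exp_atLeast_0[OF t] by simp
  also have "\<dots> = (\<integral>\<^sup>+x. ennreal (x * planck_kernel x * exp (-x*t)) * indicator {0..} x
       + (\<Sum>k. ennreal (x * exp (-(real k + 1 + t)*x)) * indicator {0..} x) \<partial>lborel)"
  proof (intro nn_integral_cong_AE, use AE_lborel_singleton[of 0] in eventually_elim)
    fix x :: real assume "x \<noteq> 0"
    show "ennreal (exp (-t*x)) * indicator {0..} x = ennreal (x * planck_kernel x * exp (-x*t)) * indicator {0..} x
       + (\<Sum>k. ennreal (x * exp (-(real k + 1 + t)*x)) * indicator {0..} x)"
    proof (cases "x > 0")
      case True
      then show ?thesis using planck_kernel_plus_suminf_eq_exp[OF True, of t]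
        by (simp add: mult.commute[of _ "indicator _ _"] distrib_left[symmetric])
    qed (use \<open>x \<noteq> 0\<close> in simp)
  qed
  also have "\<dots> = laplace_x_planck_kernel t
       + (\<integral>\<^sup>+x. (\<Sum>k. ennreal (x * exp (-(real k + 1 + t)*x)) * indicator {0..} x) \<partial>lborel)"
    unfolding laplace_x_planck_kernel_def by (rule nn_integral_add) measurable
  also have "(\<integral>\<^sup>+x. (\<Sum>k. ennreal (x * exp (-(real k + 1 + t)*x)) * indicator {0..} x) \<partial>lborel)
      = (\<Sum>k. \<integral>\<^sup>+x. ennreal (x * exp (-(real k + 1 + t)*x)) * indicator {0..} x \<partial>lborel)"
    by (rule nn_integral_suminf) measurable
  also have "\<dots> = (\<Sum>k. ennreal (1/(real k + 1 + t)^2))"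
  proof -
    have "(\<integral>\<^sup>+x. ennreal (x * exp (-(real k + 1 + t)*x)) * indicator {0..} x \<partial>lborel) = ennreal (1/(real k + 1 + t)^2)" for k
      using nn_integral_mult_exp_atLeast_0[of "real k + 1 + t"] t by (simp add: mult.commute)
    then show ?thesis by simp
  qed
  finally show ?thesis by simp
qed

lemma nn_integral_planck_kernel_square:
  "(\<integral>\<^sup>+x. ennreal (planck_kernel x ^ 2) * indicator {0..} x \<partial>lborel) =
   (\<integral>\<^sup>+t. ennreal (frac t) * laplace_x_planck_kernel t * indicator {0..} t \<partial>lborel)"
proof -
  define H where "H x t = (ennreal (x * planck_kernel x) * indicator {0..} x) * (ennreal (frac t * exp (-x*t)) * indicator {0..} t)"
    for x t :: real
  have H_measurable: "case_prod H \<in> borel_measurable (lborel \<Otimes>\<^sub>M lborel)"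
    unfolding H_def by measurable
  have inner_t: "(\<integral>\<^sup>+t. H x t \<partial>lborel) = ennreal (planck_kernel x ^ 2) * indicator {0..} x" for x
  proof (cases "x > 0")
    case True
    have "(\<integral>\<^sup>+t. H x t \<partial>lborel)
        = ennreal (x * planck_kernel x) * (\<integral>\<^sup>+t. ennreal (frac t * exp (-x*t)) * indicator {0..} t \<partial>lborel)"
      unfolding H_def using True by (subst nn_integral_cmult) auto
    also have "\<dots> = ennreal (x * planck_kernel x) * ennreal (planck_kernel x / x)"
      by (simp only: nn_integral_frac_exp[OF True])
    also have "\<dots> = ennreal (planck_kernel x ^ 2)"
      using True planck_kernel_nonneg[of x] by (simp add: ennreal_mult[symmetric] power2_eq_square)
    finally show ?thesis using True by simp
  qed (cases "x = 0", auto simp: H_def planck_kernel_def)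
  have inner_x: "(\<integral>\<^sup>+x. H x t \<partial>lborel) = ennreal (frac t) * laplace_x_planck_kernel t * indicator {0..} t" for t
  proof -
    have "H x t = (ennreal (frac t) * indicator {0..} t) * (ennreal (x * planck_kernel x * exp (-x*t)) * indicator {0..} x)"
      for x
    proof (cases "x \<ge> 0")
      case True
      then have "x * planck_kernel x \<ge> 0" using planck_kernel_nonneg[of x] by simp
      then have "ennreal (frac t * exp (-x*t)) = ennreal (frac t) * ennreal (exp (-x*t))"
        and "ennreal (x * planck_kernel x * exp (-x*t)) = ennreal (x * planck_kernel x) * ennreal (exp (-x*t))"
        by (simp_all add: ennreal_mult)
      then show ?thesis unfolding H_def by (simp only: mult_ac)
    qed (simp add: H_def)
    then have "(\<integral>\<^sup>+x. H x t \<partial>lborel) = (ennreal (frac t) * indicator {0..} t) * laplace_x_planck_kernel t"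
      unfolding laplace_x_planck_kernel_def by (simp only:) (rule nn_integral_cmult, measurable)
    then show ?thesis by (simp add: mult_ac)
  qed
  have "(\<integral>\<^sup>+x. ennreal (planck_kernel x ^ 2) * indicator {0..} x \<partial>lborel) = (\<integral>\<^sup>+x. (\<integral>\<^sup>+t. H x t \<partial>lborel) \<partial>lborel)"
    by (simp only: inner_t)
  also have "\<dots> = (\<integral>\<^sup>+t. (\<integral>\<^sup>+x. H x t \<partial>lborel) \<partial>lborel)"
    by (rule lborel_pair.Fubini'[symmetric]) (rule H_measurable)
  also have "\<dots> = (\<integral>\<^sup>+t. ennreal (frac t) * laplace_x_planck_kernel t * indicator {0..} t \<partial>lborel)"
    by (simp only: inner_x)
  finally show ?thesis .
qed

lemma frac_div_integral_has_integral:
  "((\<lambda>t. (t - real n) / t) has_integral frac_div_integral n) {real n..real n + 1}"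
proof (cases "n = 0")
  case True
  have "((\<lambda>t. (t - real n) / t) has_integral (1 - 0)) {0..1}"
  proof (rule fundamental_theorem_of_calculus_interior)
    fix t :: real assume "t \<in> {0<..<1}"
    then show "((\<lambda>t. t) has_vector_derivative (t - real n) / t) (at t)"
      using True by (auto intro!: derivative_eq_intros simp: has_real_derivative_iff_has_vector_derivative[symmetric])
  qed (auto intro: continuous_intros)
  then show ?thesis using True by (simp add: frac_div_integral_def)
next
  case False
  then have n: "real n > 0" by simp
  define F where "F t = t - real n * ln t" for t
  have "((\<lambda>t. (t - real n) / t) has_integral (F (real n + 1) - F (real n))) {real n..real n + 1}"
  proof (rule fundamental_theorem_of_calculus_interior)
    show "continuous_on {real n..real n + 1} F"
      unfolding F_def using n by (intro continuous_intros) auto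
    fix t :: real assume "t \<in> {real n<..<real n + 1}"
    then have "t > 0" using n by auto
    then show "(F has_vector_derivative (t - real n) / t) (at t)"
      unfolding F_def
      by (auto intro!: derivative_eq_intros simp: field_simps has_real_derivative_iff_has_vector_derivative[symmetric])
  qed auto
  moreover have "F (real n + 1) - F (real n) = frac_div_integral n"
    unfolding F_def frac_div_integral_def using n by (simp add: ln_div algebra_simps)
  ultimately show ?thesis by simp
qed

lemma frac_div_integral_nonneg: "frac_div_integral n \<ge> 0"
  by (rule has_integral_nonneg[OF frac_div_integral_has_integral]) auto

definition frac_shifted_square_integral :: "nat \<Rightarrow> nat \<Rightarrow> real" where
  "frac_shifted_square_integral n k =
     ln (real n + real k + 2) - ln (real n + real k + 1) - 1 / (real n + real k + 2)"

lemma frac_shifted_square_integral_has_integral: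
  "((\<lambda>t. (t - real n) / (real k + 1 + t)^2) has_integral frac_shifted_square_integral n k) {real n..real n + 1}"
proof -
  define F where "F t = ln (t + real k + 1) + (real n + real k + 1) / (t + real k + 1)" for t
  have "((\<lambda>t. (t - real n) / (real k + 1 + t)^2) has_integral (F (real n + 1) - F (real n))) {real n..real n + 1}"
  proof (rule fundamental_theorem_of_calculus_interior)
    show "continuous_on {real n..real n + 1} F"
      unfolding F_def by (intro continuous_intros) auto
    fix t :: real assume "t \<in> {real n<..<real n + 1}"
    define u where "u = t + real k + 1"
    have u: "u > 0" using \<open>t \<in> {real n<..<real n + 1}\<close> by (simp add: u_def)
    have "(F has_real_derivative (1/u - (real n + real k + 1)/u^2)) (at t)"
      unfolding F_def u_def using u[unfolded u_def]
      by (auto intro!: derivative_eq_intros simp: power2_eq_square minus_divide_left)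
    moreover have "1/u - (real n + real k + 1)/u^2 = (u - (real n + real k + 1))/u^2"
      using u by (simp add: diff_divide_distrib power2_eq_square)
    moreover have "u - (real n + real k + 1) = t - real n" "real k + 1 + t = u" by (simp_all add: u_def)
    ultimately have "(F has_real_derivative (t - real n) / (real k + 1 + t)^2) (at t)" by simp
    then show "(F has_vector_derivative (t - real n) / (real k + 1 + t)^2) (at t)"
      by (simp add: has_real_derivative_iff_has_vector_derivative)
  qed auto
  moreover have "F (real n + 1) - F (real n) = frac_shifted_square_integral n k"
    unfolding F_def frac_shifted_square_integral_def by (simp add: field_simps add_ac)
  ultimately show ?thesis by simp
qed

lemma frac_shifted_square_integral_sums:
  "(\<lambda>k. frac_shifted_square_integral n k) sums harm_remainder (Suc n)"
proof -
  have partial: "(\<Sum>k<K. frac_shifted_square_integral n k) =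
      ln (real (K + (n+1))) - ln (real n + 1) - (harm (K + (n+1)) - harm (Suc n))" for K
  proof (induction K)
    case (Suc K)
    have "harm (Suc K + (n+1)) = harm (K + (n+1)) + 1/(real n + real K + 2)"
      by (simp add: harm_Suc inverse_eq_divide add_ac)
    with Suc show ?case by (simp add: frac_shifted_square_integral_def add_ac)
  qed simp
  have "(\<lambda>K. harm (K + (n+1)) - ln (real (K + (n+1))) :: real) \<longlonglongrightarrow> euler_mascheroni"
    using LIMSEQ_ignore_initial_segment[OF euler_mascheroni_LIMSEQ, of "n+1"] by simp
  then have "(\<lambda>K. - (harm (K + (n+1)) - ln (real (K + (n+1)))) - ln (real n + 1) + harm (Suc n)) \<longlonglongrightarrow>
      - euler_mascheroni - ln (real n + 1) + harm (Suc n)"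
    by (intro tendsto_intros)
  then show ?thesis unfolding sums_def partial harm_remainder_def by (simp add: algebra_simps)
qed

lemma harm_remainder_Suc_nonneg: "harm_remainder (Suc n) \<ge> 0"
proof -
  have "frac_shifted_square_integral n k \<ge> 0" for k
    by (rule has_integral_nonneg[OF frac_shifted_square_integral_has_integral]) auto
  then show ?thesis
    using sums_le[OF _ sums_zero frac_shifted_square_integral_sums[of n]] by simp
qed

lemma frac_mult_laplace_plus_suminf:
  assumes t: "t \<in> {real n..<real n + 1}"
  shows "ennreal (frac t) * laplace_x_planck_kernel t + (\<Sum>k. ennreal ((t - real n) / (real k + 1 + t)^2))
    = ennreal ((t - real n) / t)"
proof (cases "t > 0")
  case True
  have frac: "frac t = t - real n" "t - real n \<ge> 0" using frac_eq_on_unit_interval[OF t] t by auto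
  have "ennreal ((t - real n) / (real k + 1 + t)^2) = ennreal (t - real n) * ennreal (1 / (real k + 1 + t)^2)" for k
    using frac by (simp add: ennreal_mult[symmetric])
  then have "(\<Sum>k. ennreal ((t - real n) / (real k + 1 + t)^2))
      = ennreal (t - real n) * (\<Sum>k. ennreal (1 / (real k + 1 + t)^2))"
    by (simp only: ennreal_suminf_cmult)
  then have "ennreal (frac t) * laplace_x_planck_kernel t + (\<Sum>k. ennreal ((t - real n) / (real k + 1 + t)^2))
      = ennreal (t - real n) * ennreal (1 / t)"
    unfolding frac(1) laplace_x_planck_kernel_plus_inverse_squares[OF True, symmetric]
    by (simp add: distrib_left)
  also have "\<dots> = ennreal ((t - real n) / t)"
    using frac True by (simp add: ennreal_mult[symmetric])
  finally show ?thesis .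
next
  case False
  then have "t = 0" "n = 0" using t by auto
  then show ?thesis by simp
qed

lemma nn_integral_frac_laplace_plus_harm_remainder:
  "(\<integral>\<^sup>+t. ennreal (frac t) * laplace_x_planck_kernel t * indicator {real n..<real n + 1} t \<partial>lborel)
     + ennreal (harm_remainder (Suc n)) = ennreal (frac_div_integral n)"
proof -
  let ?I = "indicator {real n..<real n + 1} :: real \<Rightarrow> ennreal"
  have "ennreal (frac_div_integral n) = (\<integral>\<^sup>+t. ennreal ((t - real n) / t) * ?I t \<partial>lborel)"
    by (rule nn_integral_Ico_eq_has_integral[OF _ _ frac_div_integral_has_integral, symmetric]) auto
  also have "\<dots> = (\<integral>\<^sup>+t. ennreal (frac t) * laplace_x_planck_kernel t * ?I t +
       (\<Sum>k. ennreal ((t - real n) / (real k + 1 + t)^2) * ?I t) \<partial>lborel)"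
  proof (rule nn_integral_cong)
    fix t :: real
    show "ennreal ((t - real n) / t) * ?I t = ennreal (frac t) * laplace_x_planck_kernel t * ?I t +
       (\<Sum>k. ennreal ((t - real n) / (real k + 1 + t)^2) * ?I t)"
      by (cases "t \<in> {real n..<real n + 1}") (simp_all add: frac_mult_laplace_plus_suminf)
  qed
  also have "\<dots> = (\<integral>\<^sup>+t. ennreal (frac t) * laplace_x_planck_kernel t * ?I t \<partial>lborel) +
       (\<integral>\<^sup>+t. (\<Sum>k. ennreal ((t - real n) / (real k + 1 + t)^2) * ?I t) \<partial>lborel)"
    by (rule nn_integral_add) measurable
  also have "(\<integral>\<^sup>+t. (\<Sum>k. ennreal ((t - real n) / (real k + 1 + t)^2) * ?I t) \<partial>lborel)
      = (\<Sum>k. \<integral>\<^sup>+t. ennreal ((t - real n) / (real k + 1 + t)^2) * ?I t \<partial>lborel)"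
    by (rule nn_integral_suminf) measurable
  also have "(\<lambda>k. \<integral>\<^sup>+t. ennreal ((t - real n) / (real k + 1 + t)^2) * ?I t \<partial>lborel)
      = (\<lambda>k. ennreal (frac_shifted_square_integral n k))"
    by (intro ext nn_integral_Ico_eq_has_integral[OF _ _ frac_shifted_square_integral_has_integral]) auto
  also have "(\<Sum>k. ennreal (frac_shifted_square_integral n k)) = ennreal (harm_remainder (Suc n))"
    using frac_shifted_square_integral_sums[of n]
      has_integral_nonneg[OF frac_shifted_square_integral_has_integral]
    by (subst suminf_ennreal2) (auto simp: sums_iff)
  finally show ?thesis by simp
qed

lemma harm_remainder_Suc_le_frac_div_integral: "harm_remainder (Suc n) \<le> frac_div_integral n"
proof -
  have "ennreal (harm_remainder (Suc n)) \<le> ennreal (frac_div_integral n)"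
    using nn_integral_frac_laplace_plus_harm_remainder[of n] by (metis le_iff_add add.commute)
  then show ?thesis using frac_div_integral_nonneg[of n] by (simp add: ennreal_le_iff)
qed

lemma nn_integral_frac_laplace_unit_interval:
  "(\<integral>\<^sup>+t. ennreal (frac t) * laplace_x_planck_kernel t * indicator {real n..<real n + 1} t \<partial>lborel)
     = ennreal (frac_div_integral n - harm_remainder (Suc n))"
proof -
  have "(\<integral>\<^sup>+t. ennreal (frac t) * laplace_x_planck_kernel t * indicator {real n..<real n + 1} t \<partial>lborel)
      = ennreal (frac_div_integral n) - ennreal (harm_remainder (Suc n))"
    using nn_integral_frac_laplace_plus_harm_remainder[of n]
    by (metis ennreal_add_diff_cancel_right ennreal_neq_top)
  then show ?thesis using harm_remainder_Suc_nonneg[of n] by (simp add: ennreal_minus)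
qed

lemma nn_integral_planck_kernel_square_eq:
  "(\<integral>\<^sup>+x. ennreal (planck_kernel x ^ 2) * indicator {0..} x \<partial>lborel)
     = ennreal (ln (2*pi) - euler_mascheroni - 1/2)"
proof -
  have "(\<integral>\<^sup>+x. ennreal (planck_kernel x ^ 2) * indicator {0..} x \<partial>lborel)
      = (\<Sum>n. \<integral>\<^sup>+t. ennreal (frac t) * laplace_x_planck_kernel t * indicator {real n..<real n + 1} t \<partial>lborel)"
    unfolding nn_integral_planck_kernel_square
    by (rule nn_integral_atLeast_0_split[of "\<lambda>t. ennreal (frac t) * laplace_x_planck_kernel t"]) measurable
  also have "\<dots> = (\<Sum>n. ennreal (frac_div_integral n - harm_remainder (Suc n)))"
    by (simp only: nn_integral_frac_laplace_unit_interval)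
  also have "\<dots> = ennreal (ln (2*pi) - euler_mascheroni - 1/2)"
    using sums_frac_div_integral_minus_harm_remainder[OF harm_remainder_Suc_le_frac_div_integral]
      harm_remainder_Suc_le_frac_div_integral
    by (subst suminf_ennreal2) (auto simp: sums_iff)
  finally show ?thesis .
qed

lemma planck_kernel_square_has_integral:
  "((\<lambda>x. planck_kernel x ^ 2) has_integral (ln (2*pi) - euler_mascheroni - 1/2)) {0<..}"
proof -
  have "0 \<le> ln (2*pi) - euler_mascheroni - 1/2"
    using sums_le[OF _ sums_zero sums_frac_div_integral_minus_harm_remainder]
      harm_remainder_Suc_le_frac_div_integral by simp
  moreover have "(\<integral>\<^sup>+x. ennreal (indicator {0<..} x * planck_kernel x ^ 2) \<partial>lborel)
      = (\<integral>\<^sup>+x. ennreal (planck_kernel x ^ 2) * indicator {0..} x \<partial>lborel)"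
    by (intro nn_integral_cong) (auto simp: indicator_def planck_kernel_def)
  ultimately have "((\<lambda>x. indicator {0<..} x * planck_kernel x ^ 2) has_integral (ln (2*pi) - euler_mascheroni - 1/2)) UNIV"
    by (intro nn_integral_has_integral) (auto simp: nn_integral_planck_kernel_square_eq)
  moreover have "(\<lambda>x. indicator {0<..} x * planck_kernel x ^ 2) = (\<lambda>x. if x \<in> {0<..} then planck_kernel x ^ 2 else 0)"
    by (auto simp: indicator_def)
  ultimately show ?thesis by (simp only: has_integral_restrict_UNIV)
qed

theorem mainTheorem20:
  shows "((\<lambda>x::real. (1 / x - 1 / (exp x - 1)) ^ 2) has_integral (2 * C_const - 1/2)) {0<..}
         \<and> A 1 = integral {0<..} (\<lambda>x::real. (1 / x - 1 / (exp x - 1)) ^ 2)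
         \<and> A 1 = 2 * C_const - 1/2"
proof -
  have C_value: "2 * C_const - 1/2 = ln (2*pi) - euler_mascheroni - 1/2"
    by (simp add: C_const_def)
  have has_int: "((\<lambda>x::real. (1 / x - 1 / (exp x - 1)) ^ 2) has_integral (2 * C_const - 1/2)) {0<..}"
    using planck_kernel_square_has_integral unfolding C_value planck_kernel_def .
  have "A 1 = integral {0<..} (\<lambda>x::real. (1 / x - 1 / (exp x - 1)) ^ 2)"
    unfolding A_def A_integrand_def by (simp add: power2_eq_square)
  with has_int show ?thesis using integral_unique by auto
qed

end
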